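(* For every $n\ge 1$, the map $\Phi=\varphi\circ\Theta$ described below is a bijection from the set of reduced plane trees with $n+1$ leaves onto the set of parking quasi-ribbons of length $n$. (i) Binary trees: a binary tree is either empty or a node with an ordered pair (left subtree, right subtree) of binary trees; $|T|$ is its number of nodes. Define a word $\varphi(T)$ of length $|T|$, each letter being attached to one node: $\varphi(\emptyset)$ is the empty word, and if $T$ has left subtree $T_1$ and right subtree $T_2$, then $$\varphi(T)=\varphi(T_2)\cdot\big(\varphi(T_1)[M-1]\big)\cdot(|T_1|+M),$$ where $M$ is the largest letter of $\varphi(T_2)$ if $T_2\neq\emptyset$ and $M=1$ if $T_2=\emptyset$, $w[k]$ denotes the word obtained by adding $k$ to every letter of $w$, the dot is concatenation, and the final letter $|T_1|+M$ is attached to the root of $T$ (the letters of the first two blocks being attached to the nodes of $T_2$ and $T_1$ as in the recursive construction). (ii) Marked binary trees: a binary tree in which each edge joining a node to its left child is either normal or marked. For such a tree, $\varphi$ of the underlying binary tree is computed, and a bar is inserted immediately before the letter attached to each node whose left edge is marked. (iii) The map $\Theta$ from reduced plane trees to marked binary trees is defined recursively: the single-leaf tree goes to the empty tree; if the root has exactly two children subtrees $T_1,T_2$, $\Theta$ gives a node with left subtree $\Theta(T_1)$ and right subtree $\Theta(T_2)$, the left edge (if any) being normal; if the root has children subtrees $T_1,\dots,T_r$ with $r\ge3$, $\Theta$ gives a node with right subtree $\Theta(T_r)$ and left subtree $\Theta(T')$, joined by a marked left edge, where $T'$ is the tree whose root has children subtrees $T_1,\dots,T_{r-1}$.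
   Context: A reduced plane tree is a rooted plane tree in which every internal vertex has at least two children. A nondecreasing parking function of length $n$ is a word $a_1a_2\cdots a_n$ of positive integers with $a_1\le a_2\le\cdots\le a_n$ and $a_i\le i$ for all $i$. A parking quasi-ribbon of length $n$ is a nondecreasing parking function of length $n$ together with a (possibly empty) set of bars placed between some consecutive letters $a_i,a_{i+1}$, only at positions where $a_i<a_{i+1}$ (for example $11|244|5566|8$). *)

theory Defs
  imports Main
begin

datatype ptree = PNode "ptree list"

fun leaves :: "ptree \<Rightarrow> nat" where
  "leaves (PNode []) = 1"
| "leaves (PNode (t # ts)) = sum_list (map leaves (t # ts))"

fun reduced :: "ptree \<Rightarrow> bool" where
  "reduced (PNode ts) = ((ts = [] \<or> 2 \<le> length ts) \<and> (\<forall>t\<in>set ts. reduced t))"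

datatype btree = BLeaf | BNode btree btree   (* BNode left right *)

fun bsize :: "btree \<Rightarrow> nat" where
  "bsize BLeaf = 0"
| "bsize (BNode l r) = Suc (bsize l + bsize r)"

fun phi :: "btree \<Rightarrow> nat list" where
  "phi BLeaf = []"
| "phi (BNode l r) =
     (let w2 = phi r; M = (if r = BLeaf then 1 else Max (set w2))
      in w2 @ map (\<lambda>x. x + (M - 1)) (phi l) @ [bsize l + M])"

text \<open>Marked binary tree: the boolean says whether the edge from the node to its
  left child is marked.\<close>
datatype mtree = MLeaf | MNode bool mtree mtree   (* MNode marked left right *)

fun forget :: "mtree \<Rightarrow> btree" where
  "forget MLeaf = BLeaf"
| "forget (MNode b l r) = BNode (forget l) (forget r)"

text \<open>For each node, in the same order as the letters of \<phi> are attached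
  (right subtree nodes, left subtree nodes, root): is its left edge marked?\<close>
fun marks :: "mtree \<Rightarrow> bool list" where
  "marks MLeaf = []"
| "marks (MNode b l r) = marks r @ marks l @ [b]"

text \<open>\<phi> on marked binary trees: the word together with the set of bar positions,
  a bar at position i (0-based) meaning a bar immediately before letter i.\<close>
definition phiM :: "mtree \<Rightarrow> nat list \<times> nat set" where
  "phiM T = (phi (forget T), {i. i < length (marks T) \<and> marks T ! i})"

lemma size_list_butlast_less:
  "ts \<noteq> [] \<Longrightarrow> size_list f (butlast ts) < size_list f ts + 1"
  by (induction ts) auto

lemma size_list_butlast_lt:
  "ts \<noteq> [] \<Longrightarrow> size_list (f::'a \<Rightarrow> nat) (butlast ts) < size_list f ts"
  by (induction ts) auto

lemma size_last_le: "ts \<noteq> [] \<Longrightarrow> (f::'a \<Rightarrow> nat) (last ts) \<le> size_list f ts"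
  by (induction ts) auto

function theta :: "ptree \<Rightarrow> mtree" and thetaL :: "ptree list \<Rightarrow> mtree" where
  "theta (PNode ts) = thetaL ts"
| "thetaL [] = MLeaf"
| "thetaL [t] = MLeaf"  (* not reached for reduced trees *)
| "thetaL [t1, t2] = MNode False (theta t1) (theta t2)"
| "thetaL (t1 # t2 # t3 # ts) =
     MNode True (thetaL (butlast (t1 # t2 # t3 # ts))) (theta (last (t1 # t2 # t3 # ts)))"
  by pat_completeness auto
termination
  apply (relation "measure (\<lambda>x. case x of Inl t \<Rightarrow> size t | Inr ts \<Rightarrow> size_list size ts)")
      apply simp
     apply simp
    apply simp
   apply simp
  subgoal for t1 t2 t3 ts
    using size_list_butlast_lt[of "t1 # t2 # t3 # ts" size] by simp
  subgoal for t1 t2 t3 ts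
    using size_last_le[of ts size] by (cases "ts = []") auto
  done

definition nd_parking :: "nat \<Rightarrow> nat list \<Rightarrow> bool" where
  "nd_parking n w \<longleftrightarrow> length w = n \<and> sorted w \<and> (\<forall>i<n. 1 \<le> w ! i \<and> w ! i \<le> i + 1)"

text \<open>Bar set B: a bar at position i means a bar between letters i-1 and i (0-based),
  allowed only when w!(i-1) < w!i.\<close>
definition parking_quasi_ribbon :: "nat \<Rightarrow> nat list \<Rightarrow> nat set \<Rightarrow> bool" where
  "parking_quasi_ribbon n w B \<longleftrightarrow> nd_parking n w \<and>
     B \<subseteq> {i. 0 < i \<and> i < n \<and> w ! (i - 1) < w ! i}"

definition Phi :: "ptree \<Rightarrow> nat list \<times> nat set" where
  "Phi t = phiM (theta t)"

end

theory Submission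
  imports Defs
begin

text \<open>\<Theta> is a bijection onto the marked binary trees in which only existing left edges are
  marked; its inverse merges the left child into its parent along each marked edge.
  The word \<open>\<phi>(T)\<close> is built by iterating the grafting \<open>(A, L) \<mapsto> A \<cdot> L[M-1] \<cdot> (|L|+M)\<close>,
  and every nondecreasing parking function arises from the empty word by grafting in exactly
  one way: \<open>A\<close> is the prefix ending at the last position where \<open>p - w\<^sub>p\<close> drops below its
  final value. So \<phi> is a bijection from binary trees onto nondecreasing parking functions.
  Finally, the node carrying letter \<open>i\<close> has a left child iff \<open>i\<close> is an ascent of \<open>\<phi>(T)\<close>, so the
  admissible marks correspond exactly to the admissible bars of a parking quasi-ribbon.\<close>

section \<open>Nondecreasing parking functions and grafting\<close>

lemma sorted_le_last: "sorted xs \<Longrightarrow> x \<in> set xs \<Longrightarrow> x \<le> last xs"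
  by (induction xs) auto

lemma sorted_Max_eq_last: "sorted xs \<Longrightarrow> xs \<noteq> [] \<Longrightarrow> Max (set xs) = last xs"
  by (simp add: Max_eqI sorted_le_last)

definition parking :: "nat list \<Rightarrow> bool" where
  "parking w \<longleftrightarrow> sorted w \<and> (\<forall>i<length w. 1 \<le> w ! i \<and> w ! i \<le> i + 1)"

lemma nd_parking_iff_parking: "nd_parking n w \<longleftrightarrow> length w = n \<and> parking w"
  unfolding nd_parking_def parking_def by auto

lemma parking_letter_bounds: "parking w \<Longrightarrow> x \<in> set w \<Longrightarrow> 1 \<le> x \<and> x \<le> length w"
  unfolding parking_def by (metis Suc_eq_plus1 Suc_leI in_set_conv_nth le_trans)

lemma parking_take: "parking w \<Longrightarrow> parking (take k w)"
  unfolding parking_def by auto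

definition top_letter :: "nat list \<Rightarrow> nat" where
  "top_letter w = (if w = [] then 1 else last w)"

lemma parking_top_letter:
  assumes "parking w"
  shows "1 \<le> top_letter w" "top_letter w \<le> length w + 1" "x \<in> set w \<Longrightarrow> x \<le> top_letter w"
  using assms parking_letter_bounds[OF assms last_in_set] sorted_le_last
  by (auto simp: top_letter_def parking_def)

text \<open>The paper's recursion for \<phi> with \<open>A = \<phi> T\<^sub>2\<close>, \<open>L = \<phi> T\<^sub>1\<close>; its \<open>M\<close> is
  \<open>top_letter A\<close>, since the largest letter of a sorted word is the last one.\<close>
definition graft :: "nat list \<Rightarrow> nat list \<Rightarrow> nat list" where
  "graft A L = A @ map (\<lambda>x. x + (top_letter A - 1)) L @ [length L + top_letter A]"

lemma length_graft [simp]: "length (graft A L) = length A + length L + 1"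
  by (simp add: graft_def)

lemma graft_not_Nil [simp]: "graft A L \<noteq> []" "[] \<noteq> graft A L"
  by (simp_all add: graft_def)

lemma nth_graft:
  "i < length A \<Longrightarrow> graft A L ! i = A ! i"
  "j < length L \<Longrightarrow> graft A L ! (length A + j) = L ! j + (top_letter A - 1)"
  "graft A L ! (length A + length L) = length L + top_letter A"
  by (simp_all add: graft_def nth_append)

lemma parking_graft:
  assumes A: "parking A" and L: "parking L"
  shows "parking (graft A L)"
proof -
  let ?M = "top_letter A"
  note M = parking_top_letter[OF A]
  have "sorted (map (\<lambda>x. x + (?M - 1)) L)"
    using L by (auto simp: parking_def sorted_iff_nth_mono)
  then have "sorted (graft A L)"
    using A M parking_letter_bounds[OF L]
    by (fastforce simp: graft_def parking_def sorted_append)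
  moreover have "1 \<le> graft A L ! i \<and> graft A L ! i \<le> i + 1" if i: "i < length (graft A L)" for i
  proof -
    consider "i < length A" | j where "j < length L" "i = length A + j" | "i = length A + length L"
      using i by (metis add_diff_inverse_nat length_graft less_Suc_eq nat_add_left_cancel_less
          Suc_eq_plus1)
    then show ?thesis
    proof cases
      case 1 then show ?thesis using A by (simp add: nth_graft parking_def)
    next
      case (2 j)
      then have "1 \<le> L ! j \<and> L ! j \<le> j + 1" using L by (simp add: parking_def)
      then show ?thesis using 2 M(1,2) by (simp add: nth_graft) linarith
    next
      case 3 then show ?thesis using M by (simp add: nth_graft)
    qed
  qed
  ultimately show ?thesis unfolding parking_def by blast
qed

lemma length_phi [simp]: "length (phi T) = bsize T"
  by (induction T) (simp_all add: Let_def)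

lemma phi_eq_Nil_iff: "phi T = [] \<longleftrightarrow> T = BLeaf"
  by (cases T) (simp_all add: Let_def)

lemma parking_phi: "parking (phi T)"
  and phi_BNode: "phi (BNode l r) = graft (phi r) (phi l)"
proof -
  have graft_eq: "phi (BNode l r) = graft (phi r) (phi l)" if "parking (phi r)" for l r
  proof -
    have "(if r = BLeaf then 1 else Max (set (phi r))) = top_letter (phi r)"
      using that sorted_Max_eq_last[of "phi r"]
      by (cases r) (auto simp: top_letter_def parking_def Let_def)
    then show ?thesis by (simp add: graft_def Let_def)
  qed
  show parking: "parking (phi T)" for T
    by (induction T) (simp add: parking_def, metis graft_eq parking_graft)
  show "phi (BNode l r) = graft (phi r) (phi l)"
    by (rule graft_eq[OF parking])
qed

declare phi.simps(2) [simp del]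

definition excess :: "nat list \<Rightarrow> nat \<Rightarrow> int" where
  "excess w p = (if p = 0 then -1 else int p - int (w ! (p - 1)))"

text \<open>In \<open>graft A L\<close> the excess \<open>p - w\<^sub>p\<close> at the end is one more than at \<open>|A|\<close> and is
  not exceeded at any later position, so \<open>|A|\<close> is the last position before the end whose
  excess lies below the final one. This recovers \<open>A\<close> and \<open>L\<close> from the word. Letters are
  counted from 1 here, and the excess at 0 is \<open>-1\<close>, its value in the case \<open>A = []\<close>.\<close>
definition split_point :: "nat list \<Rightarrow> nat" where
  "split_point w = Max {p. p < length w \<and> excess w p < excess w (length w)}"

lemma excess_eq_top_letter: "k \<le> length w \<Longrightarrow> excess w k = int k - int (top_letter (take k w))"
  by (cases k) (auto simp: excess_def top_letter_def last_conv_nth)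

lemma excess_graft:
  assumes A: "parking A" and L: "parking L"
  shows "excess (graft A L) (length A) + 1 = excess (graft A L) (length (graft A L))"
    and "length A < p \<Longrightarrow> p \<le> length (graft A L)
           \<Longrightarrow> excess (graft A L) (length (graft A L)) \<le> excess (graft A L) p"
proof -
  let ?w = "graft A L" and ?M = "top_letter A"
  have "take (length A) ?w = A" by (simp add: graft_def)
  then have eA: "excess ?w (length A) = int (length A) - int ?M"
    using excess_eq_top_letter[of "length A" ?w] by simp
  have M: "1 \<le> ?M" using parking_top_letter(1)[OF A] .
  have en: "excess ?w (length ?w) = int (length A) + 1 - int ?M"
    using nth_graft(3)[of A L] by (simp add: excess_def)
  show "excess ?w (length A) + 1 = excess ?w (length ?w)" using eA en by simp
  assume p: "length A < p" "p \<le> length ?w"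
  show "excess ?w (length ?w) \<le> excess ?w p"
  proof (cases "p = length ?w")
    case False
    then obtain j where j: "j < length L" "p - 1 = length A + j" using p by (intro that[of "p - length A - 1"]) auto
    then have "?w ! (p - 1) = L ! j + (?M - 1)" by (simp add: nth_graft)
    moreover have "L ! j \<le> j + 1" using L j by (simp add: parking_def)
    ultimately show ?thesis using p j M en by (simp add: excess_def)
  qed simp
qed

lemma split_point_eqI:
  assumes "k < length w" "excess w k < excess w (length w)"
    and "\<And>p. k < p \<Longrightarrow> p < length w \<Longrightarrow> excess w (length w) \<le> excess w p"
  shows "split_point w = k"
  unfolding split_point_def
proof (rule Max_eqI)
  show "p \<le> k" if "p \<in> {p. p < length w \<and> excess w p < excess w (length w)}" for p
    using that assms(3)[of p] by (cases "k < p") auto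
qed (use assms in auto)

lemma split_point_graft: "parking A \<Longrightarrow> parking L \<Longrightarrow> split_point (graft A L) = length A"
  by (rule split_point_eqI) (use excess_graft in \<open>fastforce+\<close>)

lemma graft_inj:
  assumes "parking A" "parking L" "parking A'" "parking L'" and eq: "graft A L = graft A' L'"
  shows "A = A' \<and> L = L'"
proof -
  have "length A = length A'"
    using split_point_graft[of A L] split_point_graft[of A' L'] assms by simp
  then have A: "A = A'"
    using eq unfolding graft_def by (metis append_eq_append_conv)
  then have "map (\<lambda>x. x + (top_letter A - 1)) L = map (\<lambda>x. x + (top_letter A - 1)) L'"
    using eq length_graft[of A L] length_graft[of A' L'] unfolding graft_def by simp
  then show ?thesis using A by simp
qed

lemma excess_Suc_le: "parking w \<Longrightarrow> p < length w \<Longrightarrow> excess w (Suc p) \<le> excess w p + 1"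
  by (cases p) (auto simp: excess_def parking_def sorted_nth_mono)

lemma split_point_excess:
  assumes w: "parking w" "w \<noteq> []"
  defines "k \<equiv> split_point w"
  shows "k < length w" "excess w k + 1 = excess w (length w)"
    and "k < p \<Longrightarrow> p \<le> length w \<Longrightarrow> excess w (length w) \<le> excess w p"
proof -
  let ?n = "length w"
  define S where "S = {p. p < ?n \<and> excess w p < excess w ?n}"
  have "w ! (?n - 1) \<le> ?n" using parking_letter_bounds[OF w(1), of "w ! (?n - 1)"] w by simp
  then have "0 \<in> S" using w by (simp add: S_def excess_def)
  moreover have "finite S" by (simp add: S_def)
  ultimately have "k \<in> S" and k_max: "\<And>p. p \<in> S \<Longrightarrow> p \<le> k"
    unfolding k_def split_point_def S_def[symmetric] using Max_in by auto
  then have k: "k < ?n" and less: "excess w k < excess w ?n" by (simp_all add: S_def)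
  then show "k < ?n" by simp
  show above: "excess w ?n \<le> excess w p" if "k < p" "p \<le> ?n" for p
    using that k_max[of p] by (cases "p = ?n") (auto simp: S_def not_less[symmetric])
  have "excess w ?n \<le> excess w (Suc k)" using above[of "Suc k"] k by simp
  then show "excess w k + 1 = excess w ?n" using excess_Suc_le[OF w(1) k] less by simp
qed

lemma parking_shift_down:
  assumes "sorted B" "1 \<le> M" and bounds: "\<forall>j<length B. M \<le> B ! j \<and> B ! j \<le> j + M"
  shows "parking (map (\<lambda>x. x - (M - 1)) B)"
    and "map (\<lambda>x. x + (M - 1)) (map (\<lambda>x. x - (M - 1)) B) = B"
proof -
  show "parking (map (\<lambda>x. x - (M - 1)) B)"
    using assms by (auto simp: parking_def sorted_iff_nth_mono diff_le_mono)
  show "map (\<lambda>x. x + (M - 1)) (map (\<lambda>x. x - (M - 1)) B) = B"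
    using assms by (auto simp: list_eq_iff_nth_eq)
qed

lemma top_letter_take_le:
  assumes "parking w" "k \<le> i" "i < length w"
  shows "top_letter (take k w) \<le> w ! i"
proof (cases k)
  case 0 then show ?thesis using assms by (simp add: top_letter_def parking_def)
next
  case (Suc k')
  moreover have "w \<noteq> []" using assms by auto
  ultimately have "top_letter (take k w) = w ! k'" using assms by (simp add: top_letter_def last_conv_nth)
  then show ?thesis using assms Suc by (simp add: parking_def sorted_nth_mono)
qed

lemma split_point_letters:
  assumes w: "parking w" "w \<noteq> []"
  defines "k \<equiv> split_point w" and "M \<equiv> top_letter (take (split_point w) w)"
  shows "w ! (length w - 1) = length w - 1 - k + M"
    and "k \<le> i \<Longrightarrow> i < length w - 1 \<Longrightarrow> M \<le> w ! i \<and> w ! i \<le> i - k + M"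
proof -
  note k = split_point_excess[OF w, folded k_def]
  have eM: "excess w k = int k - int M"
    using excess_eq_top_letter[of k w] k(1) by (simp add: M_def k_def)
  then show "w ! (length w - 1) = length w - 1 - k + M"
    using k(1,2) w(2) by (simp add: excess_def)
  assume i: "k \<le> i" "i < length w - 1"
  have "M \<le> w ! i" using top_letter_take_le[OF w(1) i(1)] i(2) by (simp add: M_def k_def)
  moreover have "excess w (length w) \<le> excess w (Suc i)" using k(3)[of "Suc i"] i by simp
  ultimately show "M \<le> w ! i \<and> w ! i \<le> i - k + M" using k(2) eM i by (simp add: excess_def)
qed

lemma graft_surj:
  assumes w: "parking w" "w \<noteq> []"
  obtains A L where "parking A" "parking L" "w = graft A L"
proof -
  define k where "k = split_point w"
  define m where "m = length w - 1 - k"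
  define A where "A = take k w"
  define B where "B = take m (drop k w)"
  define M where "M = top_letter A"
  have M_eq: "top_letter (take (split_point w) w) = M" by (simp add: M_def A_def k_def)
  note letters = split_point_letters[OF w, unfolded M_eq, folded k_def]
  have n: "length w = k + m + 1" using split_point_excess(1)[OF w] by (simp add: m_def k_def)
  have A: "parking A" using w(1) by (simp add: A_def parking_take)
  have M: "1 \<le> M" using parking_top_letter(1)[OF A] by (simp add: M_def)
  have "w = A @ B @ [w ! (k + m)]"
    using n id_take_nth_drop[of "k + m" w] by (simp add: A_def B_def take_add)
  then have w_eq: "w = A @ B @ [m + M]" using letters(1) n by simp
  have "M \<le> B ! j \<and> B ! j \<le> j + M" if "j < length B" for j
    using that letters(2)[of "k + j"] n by (simp add: B_def)
  then have bounds: "\<forall>j<length B. M \<le> B ! j \<and> B ! j \<le> j + M" by blast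
  have B: "sorted B" using w(1) by (simp add: B_def parking_def)
  define L where "L = map (\<lambda>x. x - (M - 1)) B"
  have "parking L" using parking_shift_down(1)[OF B M bounds] by (simp add: L_def)
  moreover have "w = graft A L"
    using w_eq parking_shift_down(2)[OF B M bounds] n by (simp add: graft_def L_def M_def B_def)
  ultimately show ?thesis using A that by blast
qed

lemma inj_phi: "inj phi"
proof (rule injI)
  show "phi T = phi T' \<Longrightarrow> T = T'" for T T'
  proof (induction T arbitrary: T')
    case BLeaf then show ?case by (cases T') (simp_all add: phi_BNode)
  next
    case (BNode l r)
    then obtain l' r' where T': "T' = BNode l' r'" by (cases T') (simp_all add: phi_BNode)
    then have "graft (phi r) (phi l) = graft (phi r') (phi l')"
      using BNode.prems by (simp add: phi_BNode)
    then have "phi r = phi r' \<and> phi l = phi l'"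
      using graft_inj parking_phi by blast
    then show ?case using BNode.IH T' by simp
  qed
qed

lemma phi_surj: "parking w \<Longrightarrow> \<exists>T. phi T = w"
proof (induction "length w" arbitrary: w rule: less_induct)
  case less
  show ?case
  proof (cases "w = []")
    case False
    then obtain A L where AL: "parking A" "parking L" "w = graft A L"
      using graft_surj less.prems by blast
    then have "length A < length w" "length L < length w" by simp_all
    then obtain r l where "phi r = A" "phi l = L" using less.hyps AL by metis
    then show ?thesis using AL(3) phi_BNode by metis
  qed (metis phi.simps(1))
qed

section \<open>Ascents and left children\<close>

definition ascent :: "nat list \<Rightarrow> nat \<Rightarrow> bool" where
  "ascent w i \<longleftrightarrow> 0 < i \<and> i < length w \<and> w ! (i - 1) < w ! i"

lemma ascent_graft:
  assumes A: "parking A" and L: "parking L"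
  shows "ascent (graft A L) i \<longleftrightarrow>
    ascent A i \<or> (length A \<le> i \<and> ascent L (i - length A)) \<or> (i = length A + length L \<and> L \<noteq> [])"
proof -
  let ?w = "graft A L" and ?k = "length A" and ?m = "length L" and ?M = "top_letter A"
  have M: "1 \<le> ?M" using parking_top_letter(1)[OF A] .
  have before: "0 < ?k \<Longrightarrow> ?w ! (?k - 1) = ?M"
    by (auto simp: nth_graft top_letter_def last_conv_nth)
  consider "i < ?k" | j where "j < ?m" "i = ?k + j" | "i = ?k + ?m" | "?k + ?m < i"
    by (metis add_diff_inverse_nat nat_add_left_cancel_less not_less_iff_gr_or_eq)
  then show ?thesis
  proof cases
    case 1 then show ?thesis by (auto simp: ascent_def nth_graft)
  next
    case (2 j)
    show ?thesis
    proof (cases j)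
      case 0
      have "L ! 0 = 1" using L 2 unfolding parking_def by (metis le_antisym le_add1 add_0 le_less_trans)
      then show ?thesis using 2 0 M before nth_graft(2)[of 0 L A] by (auto simp: ascent_def)
    next
      case (Suc j')
      then have "?w ! (i - 1) = L ! j' + (?M - 1)" "?w ! i = L ! j + (?M - 1)"
        using 2 Suc nth_graft(2)[of j L A] nth_graft(2)[of j' L A] by simp_all
      then show ?thesis using 2 Suc by (auto simp: ascent_def)
    qed
  next
    case 3
    show ?thesis
    proof (cases "L = []")
      case True then show ?thesis using 3 before nth_graft(3)[of A L] by (auto simp: ascent_def)
    next
      case False
      then have m: "?m - 1 < ?m" "i - 1 = ?k + (?m - 1)" using 3 by (cases L; simp)+
      have "?w ! (i - 1) = L ! (?m - 1) + (?M - 1)" unfolding m(2) by (rule nth_graft(2)[OF m(1)])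
      moreover have "L ! (?m - 1) \<le> ?m" using parking_letter_bounds[OF L, of "L ! (?m - 1)"] m by simp
      ultimately show ?thesis using 3 M False nth_graft(3)[of A L] by (auto simp: ascent_def)
    qed
  next
    case 4 then show ?thesis by (auto simp: ascent_def)
  qed
qed

fun has_left :: "btree \<Rightarrow> bool list" where
  "has_left BLeaf = []"
| "has_left (BNode l r) = has_left r @ has_left l @ [l \<noteq> BLeaf]"

lemma length_has_left [simp]: "length (has_left T) = bsize T"
  by (induction T) simp_all

lemma has_left_iff_ascent: "i < bsize T \<Longrightarrow> has_left T ! i \<longleftrightarrow> ascent (phi T) i"
proof (induction T arbitrary: i)
  case (BNode l r)
  have asc: "ascent (phi (BNode l r)) i \<longleftrightarrow> ascent (phi r) i
      \<or> (bsize r \<le> i \<and> ascent (phi l) (i - bsize r)) \<or> (i = bsize r + bsize l \<and> l \<noteq> BLeaf)"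
    by (simp add: phi_BNode ascent_graft parking_phi phi_eq_Nil_iff)
  have out: "\<not> ascent (phi T) j" if "bsize T \<le> j" for T j
    using that by (simp add: ascent_def)
  consider "i < bsize r" | "bsize r \<le> i" "i < bsize r + bsize l" | "i = bsize r + bsize l"
    using BNode.prems by (simp only: bsize.simps) linarith
  then show ?case
  proof cases
    case 1 then show ?thesis using BNode.IH(2)[OF 1] asc by (simp add: nth_append)
  next
    case 2
    then have "i - bsize r < bsize l" by simp
    then show ?thesis using 2 BNode.IH(1) asc out[of r i] by (simp add: nth_append)
  next
    case 3 then show ?thesis using asc out[of r i] out[of l "bsize l"] by (simp add: nth_append)
  qed
qed simp

definition bars :: "bool list \<Rightarrow> nat set" where
  "bars bs = {i. i < length bs \<and> bs ! i}"

lemma phiM_conv_bars: "phiM T = (phi (forget T), bars (marks T))"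
  by (simp add: phiM_def bars_def)

lemma bars_inj: "length bs = length cs \<Longrightarrow> bars bs = bars cs \<Longrightarrow> bs = cs"
  by (rule nth_equalityI) (auto simp: bars_def set_eq_iff)

lemma bars_map_mem_upt: "B \<subseteq> {..<n} \<Longrightarrow> bars (map (\<lambda>i. i \<in> B) [0..<n]) = B"
  unfolding bars_def by auto

lemma list_all2_imp_iff_bars_subset:
  "length bs = length cs \<Longrightarrow> list_all2 (\<longrightarrow>) bs cs \<longleftrightarrow> bars bs \<subseteq> bars cs"
  by (simp add: bars_def list_all2_conv_all_nth subset_iff imp_conjL)

lemma bars_has_left: "bars (has_left T) = {i. ascent (phi T) i}"
proof -
  have "ascent (phi T) i \<Longrightarrow> i < bsize T" for i by (simp add: ascent_def)
  then show ?thesis unfolding bars_def using has_left_iff_ascent[of _ T] by auto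
qed

text \<open>A mark is only allowed on an existing left edge; these are exactly the trees in the
  image of \<Theta>.\<close>
fun wf_mtree :: "mtree \<Rightarrow> bool" where
  "wf_mtree MLeaf = True"
| "wf_mtree (MNode b l r) = ((b \<longrightarrow> l \<noteq> MLeaf) \<and> wf_mtree l \<and> wf_mtree r)"

lemma length_marks [simp]: "length (marks T) = bsize (forget T)"
  by (induction T) simp_all

lemma wf_mtree_iff_marks_has_left:
  "wf_mtree T \<longleftrightarrow> list_all2 (\<longrightarrow>) (marks T) (has_left (forget T))"
proof (induction T)
  case (MNode b l r)
  have "forget l = BLeaf \<longleftrightarrow> l = MLeaf" by (cases l) simp_all
  with MNode.IH show ?case by (auto simp: list_all2_append)
qed simp

lemma wf_mtree_iff_bars_ascents:
  "wf_mtree T \<longleftrightarrow> bars (marks T) \<subseteq> {i. ascent (phi (forget T)) i}"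
  by (simp add: wf_mtree_iff_marks_has_left list_all2_imp_iff_bars_subset bars_has_left)

fun mark :: "btree \<Rightarrow> bool list \<Rightarrow> mtree" where
  "mark BLeaf bs = MLeaf"
| "mark (BNode l r) bs =
     MNode (bs ! (bsize r + bsize l))
       (mark l (take (bsize l) (drop (bsize r) bs))) (mark r (take (bsize r) bs))"

lemma forget_mark [simp]: "forget (mark T bs) = T"
  by (induction T arbitrary: bs) simp_all

lemma marks_mark: "length bs = bsize T \<Longrightarrow> marks (mark T bs) = bs"
proof (induction T arbitrary: bs)
  case (BNode l r)
  then have "drop (bsize r + bsize l) bs = [bs ! (bsize r + bsize l)]"
    using Cons_nth_drop_Suc[of "bsize r + bsize l" bs] by simp
  then have "take (bsize l) (drop (bsize r) bs) @ [bs ! (bsize r + bsize l)] = drop (bsize r) bs"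
    by (metis append_take_drop_id drop_drop add.commute)
  with BNode show ?case by simp
qed simp

lemma mtree_eqI: "forget T = forget T' \<Longrightarrow> marks T = marks T' \<Longrightarrow> T = T'"
proof (induction T arbitrary: T')
  case (MNode b l r)
  then obtain b' l' r' where T': "T' = MNode b' l' r'" by (cases T') simp_all
  with MNode.prems have "forget l = forget l'" "forget r = forget r'"
    and "marks r @ marks l @ [b] = marks r' @ marks l' @ [b']" by simp_all
  then show ?case using MNode.IH T' by simp
next
  case MLeaf then show ?case by (cases T') simp_all
qed

lemma bij_phiM:
  "bij_betw phiM {T. wf_mtree T \<and> bsize (forget T) = n} {(w, B). parking_quasi_ribbon n w B}"
proof (rule bij_betw_imageI)
  show "inj_on phiM {T. wf_mtree T \<and> bsize (forget T) = n}"
  proof (rule inj_onI)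
    fix T T' assume eq: "phiM T = phiM T'"
    then have forget: "forget T = forget T'"
      using inj_phi by (simp add: phiM_conv_bars inj_eq)
    then have "marks T = marks T'"
      using eq by (intro bars_inj) (simp_all add: phiM_conv_bars)
    with forget show "T = T'" by (rule mtree_eqI)
  qed
  have ribbon_iff:
    "parking_quasi_ribbon n w B \<longleftrightarrow> length w = n \<and> parking w \<and> B \<subseteq> {i. ascent w i}" for w B
    by (auto simp: parking_quasi_ribbon_def nd_parking_iff_parking ascent_def)
  show "phiM ` {T. wf_mtree T \<and> bsize (forget T) = n} = {(w, B). parking_quasi_ribbon n w B}"
  proof (intro equalityI subsetI)
    fix x assume "x \<in> phiM ` {T. wf_mtree T \<and> bsize (forget T) = n}"
    then show "x \<in> {(w, B). parking_quasi_ribbon n w B}"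
      by (auto simp: ribbon_iff phiM_conv_bars parking_phi wf_mtree_iff_bars_ascents)
  next
    fix x assume "x \<in> {(w, B). parking_quasi_ribbon n w B}"
    then obtain w B where x: "x = (w, B)" and ribbon: "parking_quasi_ribbon n w B" by blast
    then obtain T0 where T0: "phi T0 = w" using phi_surj by (auto simp: ribbon_iff)
    define T where "T = mark T0 (map (\<lambda>i. i \<in> B) [0..<n])"
    have size: "bsize T0 = n" using ribbon T0 by (auto simp: ribbon_iff)
    moreover have "B \<subseteq> {..<n}" using ribbon by (auto simp: ribbon_iff ascent_def)
    ultimately have "bars (marks T) = B" by (simp add: T_def marks_mark bars_map_mem_upt)
    then have "phiM T = x" and "wf_mtree T" and "bsize (forget T) = n"
      using ribbon T0 size
      by (simp_all add: x T_def phiM_conv_bars wf_mtree_iff_bars_ascents ribbon_iff)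
    then show "x \<in> phiM ` {T. wf_mtree T \<and> bsize (forget T) = n}" by blast
  qed
qed

section \<open>The map \<Theta>\<close>

fun children :: "ptree \<Rightarrow> ptree list" where
  "children (PNode ts) = ts"

text \<open>A marked left edge is undone by merging the left child into the root.\<close>
fun theta_inv :: "mtree \<Rightarrow> ptree" where
  "theta_inv MLeaf = PNode []"
| "theta_inv (MNode b l r) = PNode ((if b then children (theta_inv l) else [theta_inv l]) @ [theta_inv r])"

lemma leaves_PNode: "ts \<noteq> [] \<Longrightarrow> leaves (PNode ts) = sum_list (map leaves ts)"
  by (cases ts) simp_all

lemma children_theta_inv_nonempty: "T \<noteq> MLeaf \<Longrightarrow> children (theta_inv T) \<noteq> []"
  by (cases T) simp_all

lemma length_children_theta_inv:
  "wf_mtree T \<Longrightarrow> T \<noteq> MLeaf \<Longrightarrow> 2 \<le> length (children (theta_inv T))"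
  by (cases T) (auto simp: Suc_le_eq children_theta_inv_nonempty)

lemma reduced_theta_inv: "wf_mtree T \<Longrightarrow> reduced (theta_inv T)"
proof (induction T)
  case (MNode b l r)
  then show ?case
    using length_children_theta_inv[of l] by (cases "theta_inv l") auto
qed simp

lemma leaves_theta_inv: "wf_mtree T \<Longrightarrow> leaves (theta_inv T) = bsize (forget T) + 1"
proof (induction T)
  case (MNode b l r)
  then show ?case
    using children_theta_inv_nonempty[of l] by (cases "theta_inv l") (auto simp: leaves_PNode)
qed simp

lemma thetaL_snoc: "2 \<le> length ts \<Longrightarrow> thetaL (ts @ [t]) = MNode True (thetaL ts) (theta t)"
proof -
  assume "2 \<le> length ts"
  then obtain t1 t2 ts' where "ts @ [t] = t1 # t2 # (ts' @ [t])"
    by (metis Suc_le_length_iff numeral_2_eq_2 append_Cons)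
  moreover obtain t3 ts'' where "ts' @ [t] = t3 # ts''" by (cases "ts' @ [t]") auto
  ultimately show ?thesis by (metis thetaL.simps(4) butlast_snoc last_snoc)
qed

lemma theta_theta_inv: "wf_mtree T \<Longrightarrow> theta (theta_inv T) = T"
proof (induction T)
  case (MNode b l r)
  then show ?case
    using length_children_theta_inv[of l] by (cases "theta_inv l") (auto simp: thetaL_snoc)
qed simp

lemma wf_theta_and_theta_inv_theta:
  "reduced t \<Longrightarrow> wf_mtree (theta t) \<and> theta_inv (theta t) = t"
  "(\<forall>t\<in>set ts. reduced t) \<Longrightarrow> 2 \<le> length ts
     \<Longrightarrow> wf_mtree (thetaL ts) \<and> thetaL ts \<noteq> MLeaf \<and> theta_inv (thetaL ts) = PNode ts"
proof (induction t and ts rule: theta_thetaL.induct)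
  case (1 ts)
  then show ?case by (cases "ts = []") simp_all
next
  case (5 t1 t2 t3 ts)
  let ?ts = "t1 # t2 # t3 # ts"
  have "\<forall>t\<in>set (butlast ?ts). reduced t" using "5.prems"(1) by (meson in_set_butlastD)
  then have init: "wf_mtree (thetaL (butlast ?ts)) \<and> thetaL (butlast ?ts) \<noteq> MLeaf
      \<and> theta_inv (thetaL (butlast ?ts)) = PNode (butlast ?ts)"
    using "5.IH"(1) by simp
  have "reduced (last ?ts)" using "5.prems"(1) last_in_set by blast
  then have last: "wf_mtree (theta (last ?ts)) \<and> theta_inv (theta (last ?ts)) = last ?ts"
    using "5.IH"(2) by blast
  have "thetaL ?ts = MNode True (thetaL (butlast ?ts)) (theta (last ?ts))"
    by (simp only: thetaL.simps(4))
  moreover have "butlast ?ts @ [last ?ts] = ?ts" by (rule append_butlast_last_id) simp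
  ultimately show ?case using init last by (simp del: butlast.simps last.simps)
qed simp_all

lemma bij_theta:
  "bij_betw theta {t. reduced t \<and> leaves t = n + 1} {T. wf_mtree T \<and> bsize (forget T) = n}"
proof (rule bij_betw_byWitness[where f' = theta_inv])
  show "theta ` {t. reduced t \<and> leaves t = n + 1} \<subseteq> {T. wf_mtree T \<and> bsize (forget T) = n}"
  proof clarify
    fix t assume "reduced t" "leaves t = n + 1"
    with wf_theta_and_theta_inv_theta(1) leaves_theta_inv
    show "wf_mtree (theta t) \<and> bsize (forget (theta t)) = n"
      by (metis add_right_cancel)
  qed
  show "theta_inv ` {T. wf_mtree T \<and> bsize (forget T) = n} \<subseteq> {t. reduced t \<and> leaves t = n + 1}"
    using reduced_theta_inv leaves_theta_inv by auto
qed (use wf_theta_and_theta_inv_theta(1) theta_theta_inv in auto)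

theorem mainTheorem3:
  fixes n :: nat
  assumes "1 \<le> n"
  shows "bij_betw Phi {t. reduced t \<and> leaves t = n + 1}
           {(w, B). parking_quasi_ribbon n w B}"
proof -
  have "Phi = phiM \<circ> theta" by (simp add: Phi_def fun_eq_iff)
  then show ?thesis using bij_betw_trans[OF bij_theta bij_phiM] by simp
qed

end
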